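(* The trace of the matrix $X_{\frac{m}{n}}(q)$ has the following expression in terms of the corresponding $q$-rational: $$ \textup{Tr}\left(X_{\frac{m}{n}}(q)\right)=q\,\mathcal{N}_{\frac{m}{n}}(q)^2+\mathcal{D}_{\frac{m}{n}}(q)^2, $$ where $\mathcal{N}_{\frac{m}{n}}(q)$ and $\mathcal{D}_{\frac{m}{n}}(q)$ are the numerator and denominator of the $q$-deformed rational $\left[\frac{m}{n}\right]_q$.
   Context: Let $\frac{m}{n}>1$ be a rational number with continued fraction expansion $\frac{m}{n}=[a_1,a_2,\ldots,a_k]$, $a_i\geq 1$, where $k$ is odd. Let $$ R_q=\begin{pmatrix} q&1\\ 0&1\end{pmatrix},\qquad L_q=\begin{pmatrix} q&0\\ q&1\end{pmatrix},\qquad X_0=\begin{pmatrix}0&0\\0&1\end{pmatrix}. $$ Set $A_q:=R_q^{a_1}L_q^{a_2}R_q^{a_3}L_q^{a_4}\cdots R_q^{a_k}$ and $A_q^T:=L_q^{a_k}R_q^{a_{k-1}}L_q^{a_{k-2}}\cdots L_q^{a_1}$ (the $q$-deformed transpose of $A_q$, not the ordinary transpose), and define $X_{\frac{m}{n}}(q):=A_q\,X_0\,A_q^T$. The $q$-deformed rational is $\left[\frac{m}{n}\right]_q=A_q\left(\frac{0}{1}\right)=\frac{\mathcal{N}_{\frac{m}{n}}(q)}{\mathcal{D}_{\frac{m}{n}}(q)}$ (action by fractional-linear transformations), with $\mathcal{N}_{\frac{m}{n}}$, $\mathcal{D}_{\frac{m}{n}}$ polynomials in $q$; equivalently the second column of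 $A_q$ is $(\mathcal{N}_{\frac{m}{n}}(q),\mathcal{D}_{\frac{m}{n}}(q))^T$ and the second row of $A_q^T$ is $(q\mathcal{N}_{\frac{m}{n}}(q),\mathcal{D}_{\frac{m}{n}}(q))$. *)

theory Defs
  imports "Jordan_Normal_Form.Matrix" "HOL-Computational_Algebra.Polynomial"
begin

definition qvar :: "int poly" where "qvar = [:0, 1:]"

definition Rq :: "int poly mat" where
  "Rq = mat_of_rows_list 2 [[qvar, 1], [0, 1]]"

definition Lq :: "int poly mat" where
  "Lq = mat_of_rows_list 2 [[qvar, 0], [qvar, 1]]"

definition X0 :: "int poly mat" where
  "X0 = mat_of_rows_list 2 [[0, 0], [0, 1]]"

fun cf_value :: "nat list \<Rightarrow> rat" where
  "cf_value [] = 0"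
| "cf_value [a] = of_nat a"
| "cf_value (a # as) = of_nat a + 1 / cf_value as"

text \<open>A_q = R^a1 L^a2 R^a3 ... (the list index i is 0-based, so a_(i+1) = as ! i).\<close>
definition A_q :: "nat list \<Rightarrow> int poly mat" where
  "A_q as = foldr (*) (map (\<lambda>i. (if even i then Rq else Lq) ^\<^sub>m (as ! i)) [0..<length as]) (1\<^sub>m 2)"

text \<open>q-deformed transpose: A_q^T = L^ak R^a(k-1) L^a(k-2) ... L^a1 (k odd),
  i.e. the factors in reversed order with R and L exchanged.\<close>
definition A_qT :: "nat list \<Rightarrow> int poly mat" where
  "A_qT as = foldr (*) (map (\<lambda>i. (if even i then Lq else Rq) ^\<^sub>m (as ! i)) (rev [0..<length as])) (1\<^sub>m 2)"

definition X_q :: "nat list \<Rightarrow> int poly mat" where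
  "X_q as = A_q as * X0 * A_qT as"

text \<open>Numerator and denominator of [m/n]_q = A_q(0/1): the second column of A_q.\<close>
definition qN :: "nat list \<Rightarrow> int poly" where "qN as = A_q as $$ (0, 1)"
definition qD :: "nat list \<Rightarrow> int poly" where "qD as = A_q as $$ (1, 1)"

definition trace2 :: "'a::plus mat \<Rightarrow> 'a" where
  "trace2 M = M $$ (0, 0) + M $$ (1, 1)"

end

theory Submission
  imports Defs
begin

text \<open>With \<open>D = diag(1, q)\<close> one has \<open>L\<^sub>q D = D R\<^sub>q\<^sup>T\<close> and \<open>R\<^sub>q D = D L\<^sub>q\<^sup>T\<close>.
  Since intertwining with \<open>D\<close> reverses products, the \<open>q\<close>-deformed transpose satisfies
  \<open>A\<^sub>q\<^sup>T D = D A\<^sub>q\<^sup>t\<close> (ordinary transpose \<open>t\<close>), and comparing second rows gives that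
  the second row of \<open>A\<^sub>q\<^sup>T\<close> is \<open>(q N, D)\<close>.  As \<open>X\<^sub>0\<close> selects the second column of \<open>A\<^sub>q\<close>
  and the second row of \<open>A\<^sub>q\<^sup>T\<close>, the trace of \<open>A\<^sub>q X\<^sub>0 A\<^sub>q\<^sup>T\<close> is \<open>N \<cdot> q N + D \<cdot> D\<close>.\<close>

lemma foldr_mult_carrier_mat:
  "(\<And>M. M \<in> set Ms \<Longrightarrow> M \<in> carrier_mat n n) \<Longrightarrow> foldr (*) Ms (1\<^sub>m n) \<in> carrier_mat n n"
  by (induction Ms) (auto intro: mult_carrier_mat)

lemma foldr_mult_mat_eq_mult:
  fixes N :: "'a::semiring_1 mat"
  assumes "\<And>M. M \<in> set Ms \<Longrightarrow> M \<in> carrier_mat n n" and "N \<in> carrier_mat n n"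
  shows "foldr (*) Ms N = foldr (*) Ms (1\<^sub>m n) * N"
  using assms
  by (induction Ms)
    (auto simp: foldr_mult_carrier_mat assoc_mult_mat[of _ n n _ n _ n] left_mult_one_mat[of _ n n])

lemma pow_mat_Suc_left:
  fixes A :: "'a::semiring_1 mat"
  assumes "A \<in> carrier_mat n n"
  shows "A ^\<^sub>m Suc k = A * A ^\<^sub>m k"
proof (induction k)
  case (Suc k)
  have "A ^\<^sub>m Suc (Suc k) = A ^\<^sub>m Suc k * A"
    by (rule pow_mat.simps(2))
  also have "\<dots> = (A * A ^\<^sub>m k) * A"
    by (simp only: Suc)
  also have "\<dots> = A * A ^\<^sub>m Suc k"
    using assms by (simp only: assoc_mult_mat[of _ n n _ n _ n] pow_carrier_mat pow_mat.simps(2))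
  finally show ?case .
qed (use assms in simp)

lemma mult_intertwine_transpose:
  fixes S :: "'a::comm_semiring_1 mat"
  assumes carrier: "S \<in> carrier_mat n n" "M\<^sub>1 \<in> carrier_mat n n" "M\<^sub>2 \<in> carrier_mat n n"
      "N\<^sub>1 \<in> carrier_mat n n" "N\<^sub>2 \<in> carrier_mat n n"
    and "N\<^sub>1 * S = S * transpose_mat M\<^sub>1" and "N\<^sub>2 * S = S * transpose_mat M\<^sub>2"
  shows "N\<^sub>1 * N\<^sub>2 * S = S * transpose_mat (M\<^sub>2 * M\<^sub>1)"
proof -
  have "N\<^sub>1 * N\<^sub>2 * S = N\<^sub>1 * S * transpose_mat M\<^sub>2"
    using carrier assms(7) by (simp add: assoc_mult_mat[of _ n n _ n _ n])
  also have "\<dots> = S * (transpose_mat M\<^sub>1 * transpose_mat M\<^sub>2)"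
    using carrier assms(6) by (simp add: assoc_mult_mat[of _ n n _ n _ n])
  also have "\<dots> = S * transpose_mat (M\<^sub>2 * M\<^sub>1)"
    using carrier by (simp add: transpose_mult)
  finally show ?thesis .
qed

lemma pow_mat_intertwine_transpose:
  fixes S :: "'a::comm_semiring_1 mat"
  assumes carrier: "S \<in> carrier_mat n n" "M \<in> carrier_mat n n" "N \<in> carrier_mat n n"
    and "N * S = S * transpose_mat M"
  shows "N ^\<^sub>m k * S = S * transpose_mat (M ^\<^sub>m k)"
proof (induction k)
  case (Suc k)
  have "N ^\<^sub>m k * N * S = S * transpose_mat (M * M ^\<^sub>m k)"
    using carrier assms(4) Suc.IH by (intro mult_intertwine_transpose) auto
  then show ?case
    using pow_mat_Suc_left[OF carrier(2), of k] by simp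
qed (use carrier in simp)

lemma foldr_rev_intertwine_transpose:
  fixes S :: "'a::comm_semiring_1 mat"
  assumes "S \<in> carrier_mat n n"
    and "\<And>x. x \<in> set xs \<Longrightarrow> f x \<in> carrier_mat n n \<and> g x \<in> carrier_mat n n \<and>
      g x * S = S * transpose_mat (f x)"
  shows "foldr (*) (rev (map g xs)) (1\<^sub>m n) * S = S * transpose_mat (foldr (*) (map f xs) (1\<^sub>m n))"
  using assms(2)
proof (induction xs)
  case (Cons x xs)
  have "foldr (*) (rev (map g (x # xs))) (1\<^sub>m n) = foldr (*) (rev (map g xs)) (g x)"
    using Cons.prems by (simp add: right_mult_one_mat[of _ n n])
  also have "\<dots> = foldr (*) (rev (map g xs)) (1\<^sub>m n) * g x"
    using Cons.prems by (intro foldr_mult_mat_eq_mult) auto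
  finally have "foldr (*) (rev (map g (x # xs))) (1\<^sub>m n) * S
      = foldr (*) (rev (map g xs)) (1\<^sub>m n) * g x * S"
    by simp
  also have "\<dots> = S * transpose_mat (f x * foldr (*) (map f xs) (1\<^sub>m n))"
  proof (intro mult_intertwine_transpose)
    show "foldr (*) (map f xs) (1\<^sub>m n) \<in> carrier_mat n n"
      "foldr (*) (rev (map g xs)) (1\<^sub>m n) \<in> carrier_mat n n"
      using Cons.prems by (auto intro!: foldr_mult_carrier_mat)
  qed (use assms(1) Cons in auto)
  finally show ?case
    by simp
qed (use assms(1) in simp)

lemma mat_of_rows_list_2_carrier [simp]: "mat_of_rows_list 2 [[a, b], [c, d]] \<in> carrier_mat 2 2"
  unfolding mat_of_rows_list_def carrier_mat_def by simp

lemma mat_of_rows_list_2_index [simp]: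
  "i < 2 \<Longrightarrow> j < 2 \<Longrightarrow> mat_of_rows_list 2 [[a, b], [c, d]] $$ (i, j) = [[a, b], [c, d]] ! i ! j"
  unfolding mat_of_rows_list_def by simp

lemma mult_mat_2_index:
  assumes "A \<in> carrier_mat 2 2" "B \<in> carrier_mat 2 2" "i < 2" "j < 2"
  shows "(A * B) $$ (i, j) = A $$ (i, 0) * B $$ (0, j) + A $$ (i, 1) * B $$ (1, j)"
  using assms by (simp add: scalar_prod_def numeral_2_eq_2)

lemma mult_carrier_mat_2 [simp]:
  "A \<in> carrier_mat 2 2 \<Longrightarrow> B \<in> carrier_mat 2 2 \<Longrightarrow> A * B \<in> carrier_mat 2 2"
  by (rule mult_carrier_mat)

lemma transpose_mat_2_index [simp]:
  "A \<in> carrier_mat 2 2 \<Longrightarrow> i < 2 \<Longrightarrow> j < 2 \<Longrightarrow> transpose_mat A $$ (i, j) = A $$ (j, i)"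
  by simp

lemma mat_2_eqI:
  assumes "A \<in> carrier_mat 2 2" "B \<in> carrier_mat 2 2"
    and "A $$ (0, 0) = B $$ (0, 0)" "A $$ (0, 1) = B $$ (0, 1)"
    and "A $$ (1, 0) = B $$ (1, 0)" "A $$ (1, 1) = B $$ (1, 1)"
  shows "A = B"
  using assms by (intro eq_matI) (auto simp: less_2_cases_iff)

definition diag_q :: "int poly mat" where
  "diag_q = mat_of_rows_list 2 [[1, 0], [0, qvar]]"

lemma Rq_carrier [simp]: "Rq \<in> carrier_mat 2 2"
  and Lq_carrier [simp]: "Lq \<in> carrier_mat 2 2"
  and X0_carrier [simp]: "X0 \<in> carrier_mat 2 2"
  and diag_q_carrier [simp]: "diag_q \<in> carrier_mat 2 2"
  by (simp_all only: Rq_def Lq_def X0_def diag_q_def mat_of_rows_list_2_carrier)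

lemma Lq_diag_q: "Lq * diag_q = diag_q * transpose_mat Rq"
  unfolding Lq_def Rq_def diag_q_def
  by (rule mat_2_eqI) (simp_all add: mult_mat_2_index del: index_mult_mat)

lemma Rq_diag_q: "Rq * diag_q = diag_q * transpose_mat Lq"
  unfolding Lq_def Rq_def diag_q_def
  by (rule mat_2_eqI) (simp_all add: mult_mat_2_index del: index_mult_mat)

lemma trace2_mult_X0_mult:
  assumes "A \<in> carrier_mat 2 2" "B \<in> carrier_mat 2 2"
  shows "trace2 (A * X0 * B) = A $$ (0, 1) * B $$ (1, 0) + A $$ (1, 1) * B $$ (1, 1)"
  using assms unfolding X0_def by (simp add: trace2_def mult_mat_2_index del: index_mult_mat)

lemma A_q_carrier [simp]: "A_q as \<in> carrier_mat 2 2"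
  and A_qT_carrier [simp]: "A_qT as \<in> carrier_mat 2 2"
  unfolding A_q_def A_qT_def by (auto intro!: foldr_mult_carrier_mat)

lemma A_qT_diag_q: "A_qT as * diag_q = diag_q * transpose_mat (A_q as)"
proof -
  define f where "f = (\<lambda>i. (if even i then Rq else Lq) ^\<^sub>m (as ! i))"
  define g where "g = (\<lambda>i. (if even i then Lq else Rq) ^\<^sub>m (as ! i))"
  have "f i \<in> carrier_mat 2 2 \<and> g i \<in> carrier_mat 2 2 \<and>
      g i * diag_q = diag_q * transpose_mat (f i)" for i
    using pow_mat_intertwine_transpose[OF diag_q_carrier Rq_carrier Lq_carrier Lq_diag_q]
      pow_mat_intertwine_transpose[OF diag_q_carrier Lq_carrier Rq_carrier Rq_diag_q]
    by (simp add: f_def g_def)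
  then have "foldr (*) (rev (map g [0..<length as])) (1\<^sub>m 2) * diag_q
      = diag_q * transpose_mat (foldr (*) (map f [0..<length as]) (1\<^sub>m 2))"
    by (intro foldr_rev_intertwine_transpose) simp_all
  then show ?thesis
    unfolding A_q_def A_qT_def f_def g_def by (simp only: rev_map)
qed

lemma A_qT_second_row:
  "A_qT as $$ (1, 0) = qvar * qN as"
  "A_qT as $$ (1, 1) = qD as"
proof -
  have entry: "(A_qT as * diag_q) $$ (1, j) = (diag_q * transpose_mat (A_q as)) $$ (1, j)" for j
    by (simp only: A_qT_diag_q)
  show "A_qT as $$ (1, 0) = qvar * qN as"
    using entry[of 0] unfolding diag_q_def qN_def
    by (simp add: mult_mat_2_index del: index_mult_mat)
  have "qvar * A_qT as $$ (1, 1) = qvar * qD as"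
    using entry[of 1] unfolding diag_q_def qD_def
    by (simp add: mult_mat_2_index mult.commute del: index_mult_mat)
  then show "A_qT as $$ (1, 1) = qD as"
    by (simp add: qvar_def)
qed

theorem proposition1:
  fixes m n :: nat and as :: "nat list"
  assumes "n > 0" and "of_nat m / of_nat n > (1::rat)"
    and "\<forall>a \<in> set as. a \<ge> 1"
    and "odd (length as)"
    and "cf_value as = of_nat m / of_nat n"
  shows "trace2 (X_q as) = qvar * (qN as)^2 + (qD as)^2"
proof -
  \<comment> \<open>The identity holds for every exponent list; the hypotheses only tie \<open>as\<close> to \<open>m / n\<close>.\<close>
  have "trace2 (X_q as) = A_q as $$ (0, 1) * A_qT as $$ (1, 0) + A_q as $$ (1, 1) * A_qT as $$ (1, 1)"
    unfolding X_q_def by (simp add: trace2_mult_X0_mult)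
  also have "\<dots> = qN as * (qvar * qN as) + qD as * qD as"
    by (simp only: A_qT_second_row qN_def qD_def)
  finally show ?thesis
    by (simp add: power2_eq_square)
qed

end
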